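(* Let $A(x)=\begin{pmatrix}a_{11}(x)&a_{12}(x)\\ a_{21}(x)&a_{22}(x)\end{pmatrix}$ be a $2\times2$ matrix function holomorphic in a punctured disc around $x_0$ with convergent expansions $a_{11}(x)=\alpha_0+\alpha_1(x-x_0)+\dots$, $a_{22}(x)=\beta_0+\beta_1(x-x_0)+\dots$, $a_{12}(x)=\gamma_{-2}(x-x_0)^{-2}+\gamma_{-1}(x-x_0)^{-1}+\dots$, $a_{21}(x)=\mu_2(x-x_0)^2+\mu_3(x-x_0)^3+\dots$ (complex coefficients). Then $x_0$ is a strong regular point of the system $\frac{dW}{dx}=A(x)W$ if and only if $$\gamma_{-2}(\alpha_0-\beta_0)=\gamma_{-1}.$$
   Context: For a system $\frac{dW}{dx}=A(x)W$ with $A$ holomorphic and single-valued in a punctured disc around $x_0$, every fundamental (invertible matrix) solution has the form $W(x)=S(x)(x-x_0)^{\Phi}$ with $S$ holomorphic and single-valued in the punctured disc and $\Phi$ a constant matrix. The point $x_0$ is called strong regular for the system if a fundamental solution $W$ is single-valued in the punctured disc and has at most a pole at $x_0$, i.e. $W(x)=\sum_{k\ge m}b_k(x-x_0)^k$ for some $m\in\mathbb Z$. *)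

theory Defs
  imports "HOL-Analysis.Analysis"
begin

definition solves_on :: "(complex \<Rightarrow> complex^'n^'n) \<Rightarrow> (complex \<Rightarrow> complex^'n^'n) \<Rightarrow> complex set \<Rightarrow> bool" where
  "solves_on A W S \<longleftrightarrow>
     (\<forall>x\<in>S. \<forall>i j. ((\<lambda>y. W y $ i $ j) has_field_derivative ((A x ** W x) $ i $ j)) (at x))"

text \<open>Strong regular point: some fundamental (pointwise invertible) solution,
  defined (hence single-valued) on a punctured disc around x0, is given there by
  a Laurent series with finitely many negative powers,
  W(x) = sum_{k >= m} b_k (x - x0)^k (entrywise).\<close>
definition strong_regular_point :: "(complex \<Rightarrow> complex^'n^'n) \<Rightarrow> complex \<Rightarrow> bool" where
  "strong_regular_point A x0 \<longleftrightarrow>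
     (\<exists>r>0. \<exists>W :: complex \<Rightarrow> complex^'n^'n. \<exists>m::int.
        solves_on A W (ball x0 r - {x0}) \<and>
        (\<forall>x\<in>ball x0 r - {x0}. det (W x) \<noteq> 0) \<and>
        (\<forall>i j. \<exists>b :: nat \<Rightarrow> complex. \<forall>x\<in>ball x0 r - {x0}.
           (\<lambda>n. b n * (x - x0) powi (int n + m)) sums (W x $ i $ j)))"

end

theory Submission
  imports Defs "HOL-Complex_Analysis.Complex_Analysis"
begin

text \<open>
  With \<open>c = \<gamma>\<^sub>-\<^sub>2\<close>, the gauge transformation \<open>W \<mapsto> T W\<close> by the shear
  \<open>T(x) = [[1, c/(x - x\<^sub>0)], [0, 1]]\<close> replaces \<open>A\<close> by \<open>B = (T A + T') T\<^sup>-\<^sup>1\<close>, which is holomorphic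
  at \<open>x\<^sub>0\<close> except for a simple pole of its \<open>(1,2)\<close> entry with residue
  \<open>e = \<gamma>\<^sub>-\<^sub>1 - \<gamma>\<^sub>-\<^sub>2 (\<alpha>\<^sub>0 - \<beta>\<^sub>0)\<close>; the double pole cancels.

  If \<open>e = 0\<close>, then \<open>B\<close> is holomorphic at \<open>x\<^sub>0\<close>, Picard iteration gives a holomorphic fundamental
  solution \<open>Y\<close> of \<open>Y' = B Y\<close>, and \<open>T\<^sup>-\<^sup>1 Y\<close> is a fundamental solution of the original system
  with at most a simple pole.

  If \<open>e \<noteq> 0\<close>, compare lowest-order terms of a formal Laurent solution \<open>(P, Q)\<close> of the sheared
  system: since a formal derivative has no residue, \<open>e Q(x\<^sub>0) = 0\<close>, which forces \<open>ord Q \<ge> 1\<close> and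
  then \<open>ord P \<ge> 0\<close>. So the Wronskian \<open>D\<close> of two solutions vanishes at \<open>x\<^sub>0\<close>; as \<open>D' = (tr B) D\<close>
  with \<open>tr B\<close> holomorphic, \<open>D = 0\<close>, and no solution with a Laurent expansion is fundamental.
\<close>

(* $ is matrix indexing throughout *)
no_notation fps_nth (infixl \<open>$\<close> 75)

section \<open>Orders of formal Laurent series\<close>

definition fls_vanishes_below :: "int \<Rightarrow> 'a::zero fls \<Rightarrow> bool" where
  "fls_vanishes_below k F \<longleftrightarrow> (\<forall>n<k. fls_nth F n = 0)"

lemma fls_vanishes_below_mono: "fls_vanishes_below k F \<Longrightarrow> j \<le> k \<Longrightarrow> fls_vanishes_below j F"
  by (simp add: fls_vanishes_below_def)

lemma fls_vanishes_below_0 [simp]: "fls_vanishes_below k 0"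
  by (simp add: fls_vanishes_below_def)

lemma fls_vanishes_below_const: "fls_vanishes_below 0 (fls_const c)"
  by (simp add: fls_vanishes_below_def)

lemma fls_vanishes_below_subdegree: "fls_vanishes_below (fls_subdegree F) F"
  by (simp add: fls_vanishes_below_def)

lemma fls_vanishes_below_add:
  "fls_vanishes_below k F \<Longrightarrow> fls_vanishes_below k G \<Longrightarrow> fls_vanishes_below k (F + G)"
  by (simp add: fls_vanishes_below_def)

lemma fls_vanishes_below_diff:
  "fls_vanishes_below k F \<Longrightarrow> fls_vanishes_below k G \<Longrightarrow> fls_vanishes_below k (F - G)"
  by (simp add: fls_vanishes_below_def)

lemma fls_vanishes_below_nonzero_nth:
  "fls_vanishes_below k F \<Longrightarrow> fls_nth F n \<noteq> 0 \<Longrightarrow> k \<le> n"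
  by (meson fls_vanishes_below_def not_le)

lemma fls_vanishes_below_mult:
  fixes F G :: "'a::ring_1 fls"
  assumes "fls_vanishes_below a F" "fls_vanishes_below b G"
  shows "fls_vanishes_below (a + b) (F * G)"
proof (cases "F = 0 \<or> G = 0")
  case False
  then have "a \<le> fls_subdegree F" "b \<le> fls_subdegree G"
    using assms by (auto intro!: fls_subdegree_geI simp: fls_vanishes_below_def)
  then show ?thesis
    unfolding fls_vanishes_below_def by (auto intro!: fls_times_nth_eq0)
qed auto

lemma fls_vanishes_below_const_mult:
  fixes F :: "'a::ring_1 fls"
  shows "fls_vanishes_below k F \<Longrightarrow> fls_vanishes_below k (fls_const c * F)"
  using fls_vanishes_below_mult[OF fls_vanishes_below_const] by fastforce

lemma fls_nth_X_inv_mult: "fls_nth (fls_X_inv * (F :: 'a::ring_1 fls)) n = fls_nth F (n + 1)"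
  by (subst fls_X_inv_times_conv_shift(1)) simp

lemma fls_vanishes_below_X_inv_mult:
  fixes F :: "'a::ring_1 fls"
  shows "fls_vanishes_below k F \<Longrightarrow> fls_vanishes_below (k - 1) (fls_X_inv * F)"
  by (simp add: fls_vanishes_below_def fls_nth_X_inv_mult)

section \<open>Formal solutions near a simple pole\<close>

lemma fls_subdegree_less_if_deriv_eq:
  fixes F G H C :: "'a::field_char_0 fls"
  assumes F: "fls_deriv F = H * F + C * G" and H: "fls_vanishes_below 0 H"
    and C: "fls_vanishes_below c C" and "F \<noteq> 0" "fls_subdegree F \<noteq> 0"
  shows "G \<noteq> 0 \<and> c + fls_subdegree G < fls_subdegree F"
proof -
  let ?n = "fls_subdegree F - 1"
  have "fls_nth (fls_deriv F) ?n \<noteq> 0"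
    using assms(4,5) by (simp add: fls_deriv_nth)
  moreover have "fls_nth (H * F) ?n = 0"
    using fls_vanishes_below_mult[OF H fls_vanishes_below_subdegree, of F]
    by (simp add: fls_vanishes_below_def)
  ultimately have "fls_nth (C * G) ?n \<noteq> 0"
    using F by simp
  moreover have "fls_vanishes_below (c + fls_subdegree G) (C * G)"
    by (rule fls_vanishes_below_mult[OF C fls_vanishes_below_subdegree])
  ultimately show ?thesis
    by (auto dest: fls_vanishes_below_nonzero_nth)
qed

lemma fls_system_solution_vanishes_below:
  fixes P Q H11 K H21 H22 :: "'a::field_char_0 fls"
  assumes P: "fls_deriv P = H11 * P + (K + fls_const e * fls_X_inv) * Q"
    and Q: "fls_deriv Q = H22 * Q + H21 * P"
    and H: "fls_vanishes_below 0 H11" "fls_vanishes_below 0 K"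
      "fls_vanishes_below 0 H21" "fls_vanishes_below 0 H22"
    and e: "e \<noteq> 0"
  shows "fls_vanishes_below 0 P \<and> fls_vanishes_below 1 Q"
proof -
  let ?a = "fls_subdegree P" and ?b = "fls_subdegree Q"
  have "fls_vanishes_below (-1) (K + fls_const e * fls_X_inv)"
    using H(2) by (auto simp: fls_vanishes_below_def)
  note order_P = fls_subdegree_less_if_deriv_eq[OF P H(1) this]
  note order_Q = fls_subdegree_less_if_deriv_eq[OF Q H(4,3)]
  have P0: "fls_vanishes_below 0 P" if "P = 0 \<or> 0 \<le> ?a"
    using that fls_vanishes_below_subdegree[of P] by (auto elim: fls_vanishes_below_mono)
  show ?thesis
  proof (cases "Q = 0")
    case True
    then show ?thesis
      using order_P P0 by fastforce
  next
    case False
    have "?b \<noteq> 0"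
    proof
      assume b: "?b = 0"
      then have "fls_vanishes_below 0 P"
        using order_P P0 by fastforce
      then have "fls_nth (H11 * P) (-1) = 0" "fls_nth (K * Q) (-1) = 0"
        using fls_vanishes_below_mult[OF H(1)] b
          fls_vanishes_below_mult[OF H(2) fls_vanishes_below_subdegree[of Q]]
        by (simp_all add: fls_vanishes_below_def)
      \<comment> \<open>a formal derivative has no residue\<close>
      then have "e * fls_nth Q 0 = 0"
        using arg_cong[OF P, of "\<lambda>F. fls_nth F (-1)"]
        by (simp add: distrib_right mult.assoc fls_nth_X_inv_mult)
      then show False
        using e False b nth_fls_subdegree_nonzero[of Q] by simp
    qed
    then have "?a = 0" "0 < ?b"
      using order_P order_Q False by force+
    then show ?thesis
      using P0 fls_vanishes_below_subdegree[of Q] by (auto elim: fls_vanishes_below_mono)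
  qed
qed

lemma fls_eq_0_if_deriv_eq_mult:
  fixes D H :: "'a::field_char_0 fls"
  assumes "fls_deriv D = H * D" "fls_vanishes_below 0 H" "fls_vanishes_below 1 D"
  shows "D = 0"
proof (rule ccontr)
  assume "D \<noteq> 0"
  moreover have "1 \<le> fls_subdegree D"
    using assms(3) \<open>D \<noteq> 0\<close> by (auto intro!: fls_subdegree_geI simp: fls_vanishes_below_def)
  ultimately show False
    using fls_subdegree_less_if_deriv_eq[of D H 0 0 0] assms(1,2) by simp
qed

lemma matrix_mult_nth_2:
  "((M::'a::semiring_1^2^2) ** N) $ i $ j = M $ i $ 1 * N $ 1 $ j + M $ i $ 2 * N $ 2 $ j"
  by (simp add: matrix_matrix_mult_def sum_2)

lemma det_fls_solution_eq_0:
  fixes L Y :: "'a::field_char_0 fls^2^2"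
  assumes sol: "\<And>i j. fls_deriv (Y $ i $ j) = (L ** Y) $ i $ j"
    and L: "fls_vanishes_below 0 (L $ 1 $ 1)"
      "fls_vanishes_below 0 (L $ 1 $ 2 - fls_const e * fls_X_inv)"
      "fls_vanishes_below 0 (L $ 2 $ 1)" "fls_vanishes_below 0 (L $ 2 $ 2)"
    and e: "e \<noteq> 0"
  shows "det Y = 0"
proof (rule fls_eq_0_if_deriv_eq_mult)
  have col: "fls_vanishes_below 0 (Y $ 1 $ j) \<and> fls_vanishes_below 1 (Y $ 2 $ j)" for j
    by (rule fls_system_solution_vanishes_below[OF _ _ L(1,2,3,4) e])
       (simp_all add: sol matrix_mult_nth_2 add.commute)
  show "fls_vanishes_below 1 (det Y)"
    unfolding det_2 using col[of 1] col[of 2]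
    by (intro fls_vanishes_below_diff fls_vanishes_below_mult[of 0 _ 1, simplified]) auto
  show "fls_vanishes_below 0 (L $ 1 $ 1 + L $ 2 $ 2)"
    by (intro fls_vanishes_below_add L)
  \<comment> \<open>Liouville's formula\<close>
  show "fls_deriv (det Y) = (L $ 1 $ 1 + L $ 2 $ 2) * det Y"
    by (simp add: det_2 fls_deriv_mult sol matrix_mult_nth_2 algebra_simps)
qed

section \<open>Shear gauge transformations\<close>

definition shear :: "'a::comm_ring_1 \<Rightarrow> 'a^2^2" where
  "shear t = vector [vector [1, t], vector [0, 1]]"

lemma shear_nth [simp]:
  "shear t $ 1 $ 1 = 1" "shear t $ 1 $ 2 = t" "shear t $ 2 $ 1 = 0" "shear t $ 2 $ 2 = 1"
  by (simp_all add: shear_def)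

lemma det_shear [simp]: "det (shear t) = 1"
  by (simp add: det_2)

text \<open>If \<open>W' = A W\<close> and \<open>T = shear t\<close>, then \<open>T' = shear t' - 1\<close> and
  \<open>(T W)' = (T A + T') T\<^sup>-\<^sup>1 (T W)\<close>; \<open>gauge_shear t t' A\<close> is this new coefficient matrix.\<close>
definition gauge_shear :: "'a::comm_ring_1 \<Rightarrow> 'a \<Rightarrow> 'a^2^2 \<Rightarrow> 'a^2^2" where
  "gauge_shear t dt A = (shear t ** A + (shear dt - mat 1)) ** shear (- t)"

lemma gauge_shear_nth:
  "gauge_shear t dt A $ 1 $ 1 = A $ 1 $ 1 + t * A $ 2 $ 1"
  "gauge_shear t dt A $ 1 $ 2 = A $ 1 $ 2 + t * (A $ 2 $ 2 - A $ 1 $ 1) - t\<^sup>2 * A $ 2 $ 1 + dt"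
  "gauge_shear t dt A $ 2 $ 1 = A $ 2 $ 1"
  "gauge_shear t dt A $ 2 $ 2 = A $ 2 $ 2 - t * A $ 2 $ 1"
  by (simp_all add: gauge_shear_def matrix_mult_nth_2 mat_def algebra_simps power2_eq_square)

lemma gauge_shear_intertwines:
  "(shear dt - mat 1) + shear t ** A = gauge_shear t dt A ** shear t"
  "(shear (- dt) - mat 1) + shear (- t) ** gauge_shear t dt A = A ** shear (- t)"
  by (simp_all add: vec_eq_iff forall_2 matrix_mult_nth_2 gauge_shear_nth mat_def
      algebra_simps power2_eq_square)

lemma shear_has_field_derivative:
  assumes "(f has_field_derivative f') (at x)"
  shows "((\<lambda>y. shear (f y) $ i $ j) has_field_derivative (shear f' - mat 1) $ i $ j) (at x)"
  using assms exhaust_2[of i] exhaust_2[of j] by (auto simp: mat_def)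

lemma solves_on_gauge:
  fixes A B T T' :: "complex \<Rightarrow> complex^'n^'n"
  assumes sol: "solves_on A W S"
    and T: "\<And>x i j. x \<in> S \<Longrightarrow> ((\<lambda>y. T y $ i $ j) has_field_derivative T' x $ i $ j) (at x)"
    and B: "\<And>x. x \<in> S \<Longrightarrow> T' x + T x ** A x = B x ** T x"
  shows "solves_on B (\<lambda>x. T x ** W x) S"
  unfolding solves_on_def
proof (intro ballI allI)
  fix x i j assume x: "x \<in> S"
  have "((\<lambda>y. (T y ** W y) $ i $ j) has_field_derivative
          (\<Sum>k\<in>UNIV. T' x $ i $ k * W x $ k $ j + (A x ** W x) $ k $ j * T x $ i $ k)) (at x)"
    using sol x unfolding solves_on_def matrix_matrix_mult_def vec_lambda_beta
    by (intro DERIV_sum DERIV_mult T) auto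
  also have "(\<Sum>k\<in>UNIV. T' x $ i $ k * W x $ k $ j + (A x ** W x) $ k $ j * T x $ i $ k)
      = (T' x ** W x + T x ** (A x ** W x)) $ i $ j"
    by (simp add: matrix_matrix_mult_def sum.distrib mult.commute)
  also have "T' x ** W x + T x ** (A x ** W x) = (T' x + T x ** A x) ** W x"
    unfolding matrix_mul_assoc
    by (simp add: vec_eq_iff matrix_matrix_mult_def sum.distrib distrib_right)
  also have "(T' x + T x ** A x) ** W x = B x ** (T x ** W x)"
    by (simp add: B[OF x] matrix_mul_assoc)
  finally show "((\<lambda>y. (T y ** W y) $ i $ j) has_field_derivative
      (B x ** (T x ** W x)) $ i $ j) (at x)" .
qed

section \<open>Entrywise Laurent expansions\<close>

definition has_laurent_expansion_entrywise ::
    "(complex \<Rightarrow> complex^'n^'m) \<Rightarrow> complex fls^'n^'m \<Rightarrow> bool"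
    (infixl \<open>has'_laurent'_expansion'_entrywise\<close> 60) where
  "M has_laurent_expansion_entrywise L \<longleftrightarrow> (\<forall>i j. (\<lambda>z. M z $ i $ j) has_laurent_expansion L $ i $ j)"

lemma has_laurent_expansion_entrywise_add:
  "M has_laurent_expansion_entrywise L \<Longrightarrow> N has_laurent_expansion_entrywise K \<Longrightarrow>
     (\<lambda>z. M z + N z) has_laurent_expansion_entrywise L + K"
  by (simp add: has_laurent_expansion_entrywise_def has_laurent_expansion_add)

lemma has_laurent_expansion_entrywise_diff:
  "M has_laurent_expansion_entrywise L \<Longrightarrow> N has_laurent_expansion_entrywise K \<Longrightarrow>
     (\<lambda>z. M z - N z) has_laurent_expansion_entrywise L - K"
  by (simp add: has_laurent_expansion_entrywise_def has_laurent_expansion_diff)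

lemma has_laurent_expansion_entrywise_mult:
  "M has_laurent_expansion_entrywise L \<Longrightarrow> N has_laurent_expansion_entrywise K \<Longrightarrow>
     (\<lambda>z. M z ** N z) has_laurent_expansion_entrywise L ** K"
  unfolding has_laurent_expansion_entrywise_def matrix_matrix_mult_def
  by (auto intro!: has_laurent_expansion_sum has_laurent_expansion_mult)

lemma has_laurent_expansion_entrywise_shear:
  "f has_laurent_expansion F \<Longrightarrow> (\<lambda>z. shear (f z)) has_laurent_expansion_entrywise shear F"
  unfolding has_laurent_expansion_entrywise_def forall_2 by simp

lemma has_laurent_expansion_entrywise_mat_1: "(\<lambda>z. mat 1) has_laurent_expansion_entrywise mat 1"
  by (simp add: has_laurent_expansion_entrywise_def mat_def)

lemma has_laurent_expansion_det:
  "M has_laurent_expansion_entrywise L \<Longrightarrow> (\<lambda>z. det (M z)) has_laurent_expansion det L"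
  unfolding has_laurent_expansion_entrywise_def det_def
  by (auto intro!: has_laurent_expansion_sum has_laurent_expansion_prod has_laurent_expansion_mult
      simp: fls_of_int)

lemma has_laurent_expansion_of_power_series:
  fixes b :: "nat \<Rightarrow> complex"
  assumes "r > 0" and sums: "\<And>z. z \<in> ball 0 r - {0} \<Longrightarrow> (\<lambda>n. b n * z ^ n) sums g z"
  shows "g has_laurent_expansion fps_to_fls (Abs_fps b)"
  unfolding has_laurent_expansion_def
proof
  define R where "R = ereal (r / 2)"
  have "summable (\<lambda>n. b n * of_real (r / 2) ^ n)"
    using sums[of "of_real (r / 2)"] \<open>r > 0\<close> by (auto intro: sums_summable)
  then have R: "0 < R" "R \<le> fps_conv_radius (Abs_fps b)"
    using \<open>r > 0\<close> conv_radius_geI[of b "of_real (r / 2)"] by (auto simp: R_def fps_conv_radius_def)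
  then show "0 < fls_conv_radius (fps_to_fls (Abs_fps b))"
    by simp
  have "eventually (\<lambda>z. z \<in> ball 0 (r / 2) - {0}) (at (0::complex))"
    using \<open>r > 0\<close> by (intro eventually_at_in_open) auto
  then show "eventually (\<lambda>z. eval_fls (fps_to_fls (Abs_fps b)) z = g z) (at 0)"
  proof eventually_elim
    case (elim z)
    then have "ereal (norm z) < R"
      by (simp add: R_def)
    then have "ereal (norm z) < fps_conv_radius (Abs_fps b)"
      using R(2) by (rule less_le_trans)
    then show ?case
      using sums[of z] elim \<open>r > 0\<close> by (auto simp: eval_fps_to_fls eval_fps_def sums_iff)
  qed
qed

lemma has_laurent_expansion_of_sums:
  fixes b :: "nat \<Rightarrow> complex" and m :: int
  assumes "r > 0"
    and sums: "\<And>x. x \<in> ball x0 r - {x0} \<Longrightarrow> (\<lambda>n. b n * (x - x0) powi (int n + m)) sums f x"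
  shows "(\<lambda>z. f (x0 + z)) has_laurent_expansion fps_to_fls (Abs_fps b) * fls_X_intpow m"
proof -
  define g where "g z = f (x0 + z) * z powi (- m)" for z
  have "(\<lambda>n. b n * z ^ n) sums g z" if "z \<in> ball 0 r - {0}" for z
  proof -
    have "(\<lambda>n. b n * z powi (int n + m)) sums f (x0 + z)"
      using sums[of "x0 + z"] that by (simp add: dist_norm)
    then have "(\<lambda>n. b n * z powi (int n + m) * z powi (- m)) sums g z"
      unfolding g_def by (rule sums_mult2)
    moreover have "b n * z powi (int n + m) * z powi (- m) = b n * z ^ n" for n
      using that by (simp add: power_int_add power_int_minus field_simps)
    ultimately show ?thesis by simp
  qed
  then have "(\<lambda>z. g z * z powi m) has_laurent_expansion fps_to_fls (Abs_fps b) * fls_X_intpow m"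
    by (intro laurent_expansion_intros has_laurent_expansion_of_power_series[OF \<open>r > 0\<close>])
  moreover have "eventually (\<lambda>z. g z * z powi m = f (x0 + z)) (at 0)"
    by (auto simp: eventually_at_filter g_def power_int_minus)
  ultimately show ?thesis
    using has_laurent_expansion_cong[of "\<lambda>z. g z * z powi m" "\<lambda>z. f (x0 + z)"] by blast
qed

lemma removable_singularity_if_laurent_vanishes_below:
  assumes "f holomorphic_on ball x0 r - {x0}" "(\<lambda>z. f (x0 + z)) has_laurent_expansion F"
    "fls_vanishes_below 0 F"
  shows "(\<lambda>x. if x = x0 then fls_nth F 0 else f x) holomorphic_on ball x0 r"
proof -
  have "fls_subdegree F \<ge> 0"
    using assms(3) by (cases "F = 0") (auto intro: fls_subdegree_geI simp: fls_vanishes_below_def)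
  then show ?thesis
    using assms(1,2) by (intro removable_singularity has_laurent_expansion_imp_tendsto) auto
qed

lemma solves_on_imp_fls_solution:
  assumes "r > 0" and sol: "solves_on A W (ball x0 r - {x0})"
    and LA: "(\<lambda>z. A (x0 + z)) has_laurent_expansion_entrywise LA"
    and FW: "(\<lambda>z. W (x0 + z)) has_laurent_expansion_entrywise FW"
  shows "fls_deriv (FW $ i $ j) = (LA ** FW) $ i $ j"
proof -
  have "((\<lambda>z. W (x0 + z) $ i $ j) has_field_derivative (A (x0 + z) ** W (x0 + z)) $ i $ j) (at z)"
    if "z \<in> ball 0 r - {0}" for z
  proof -
    have "x0 + z \<in> ball x0 r - {x0}"
      using that by (auto simp: dist_norm)
    then have "((\<lambda>x. W x $ i $ j) has_field_derivative
        (A (x0 + z) ** W (x0 + z)) $ i $ j) (at (x0 + z))"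
      using sol by (simp add: solves_on_def)
    then show ?thesis
      using DERIV_shift[of "\<lambda>x. W x $ i $ j" _ z x0] by (simp add: add.commute)
  qed
  then have "(\<lambda>z. (A (x0 + z) ** W (x0 + z)) $ i $ j) has_laurent_expansion fls_deriv (FW $ i $ j)"
    using FW \<open>r > 0\<close> unfolding has_laurent_expansion_entrywise_def
    by (intro has_laurent_expansion_deriv'[where A = "ball 0 r"]) auto
  moreover have "(\<lambda>z. (A (x0 + z) ** W (x0 + z)) $ i $ j) has_laurent_expansion (LA ** FW) $ i $ j"
    using has_laurent_expansion_entrywise_mult[OF LA FW]
    by (simp add: has_laurent_expansion_entrywise_def)
  ultimately show ?thesis
    by (rule has_laurent_expansion_unique)
qed

section \<open>Holomorphic fundamental solutions\<close>

lemma has_field_derivative_contour_integral_linepath: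
  assumes "h holomorphic_on ball x0 r" "z \<in> ball x0 r"
  shows "((\<lambda>w. contour_integral (linepath x0 w) h) has_field_derivative h z) (at z)"
proof -
  obtain g where g: "\<And>x. x \<in> ball x0 r \<Longrightarrow> (g has_field_derivative h x) (at x within ball x0 r)"
    using holomorphic_convex_primitive'[OF convex_ball open_ball assms(1)] by blast
  have x0: "x0 \<in> ball x0 r"
    using assms(2) zero_le_dist[of x0 z] unfolding mem_ball dist_self by linarith
  have primitive: "g w - g x0 = contour_integral (linepath x0 w) h" if "w \<in> ball x0 r" for w
  proof -
    have "(h has_contour_integral g (pathfinish (linepath x0 w)) - g (pathstart (linepath x0 w)))
        (linepath x0 w)"
      using closed_segment_subset[OF x0 that convex_ball]
      by (intro contour_integral_primitive[OF g]) auto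
    then show ?thesis
      by (simp add: contour_integral_unique)
  qed
  have "(g has_field_derivative h z) (at z)"
    using g[OF assms(2)] by (simp add: at_within_open[OF assms(2) open_ball])
  then have "((\<lambda>w. g w - g x0) has_field_derivative h z) (at z)"
    using DERIV_diff[OF _ DERIV_const] by fastforce
  then show ?thesis
    by (rule has_field_derivative_transform_within_open[OF _ open_ball assms(2)]) (rule primitive)
qed

lemma norm_contour_integral_linepath_le:
  assumes "h holomorphic_on ball x0 \<delta>" "z \<in> ball x0 \<delta>"
    and bound: "\<And>w. w \<in> ball x0 \<delta> \<Longrightarrow> norm (h w) \<le> B"
  shows "norm (contour_integral (linepath x0 z) h) \<le> B * \<delta>"
proof -
  have "x0 \<in> ball x0 \<delta>"
    using assms(2) zero_le_dist[of x0 z] unfolding mem_ball dist_self by linarith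
  then have "closed_segment x0 z \<subseteq> ball x0 \<delta>"
    using closed_segment_subset[OF _ assms(2) convex_ball] by blast
  moreover have B: "0 \<le> B"
    by (rule order_trans[OF norm_ge_zero bound[OF assms(2)]])
  ultimately have "norm (contour_integral (linepath x0 z) h) \<le> B * norm (z - x0)"
    by (intro contour_integral_bound_linepath bound
        contour_integrable_holomorphic_simple[OF assms(1) open_ball valid_path_linepath]) auto
  also have "\<dots> \<le> B * \<delta>"
    using assms(2) B by (intro mult_left_mono) (auto simp: dist_norm norm_minus_commute)
  finally show ?thesis .
qed

lemma norm_matrix_mult_nth_le:
  fixes A B :: "complex^'n^'n" and M K :: real
  assumes "\<And>l. norm (A $ i $ l) \<le> M" "\<And>l. norm (B $ l $ j) \<le> K"
  shows "norm ((A ** B) $ i $ j) \<le> CARD('n) * M * K"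
proof -
  have "norm ((A ** B) $ i $ j) \<le> (\<Sum>l\<in>UNIV. norm (A $ i $ l) * norm (B $ l $ j))"
    unfolding matrix_matrix_mult_def vec_lambda_beta norm_mult[symmetric] by (rule norm_sum)
  also have "\<dots> \<le> (\<Sum>l::'n\<in>UNIV. M * K)"
    using assms order_trans[OF norm_ge_zero assms(1)] by (intro sum_mono mult_mono) auto
  finally show ?thesis
    by simp
qed

text \<open>Picard iteration for \<open>Y' = G Y\<close>, \<open>Y(x\<^sub>0) = 1\<close>, written as a series of increments.\<close>
primrec picard_term :: "complex \<Rightarrow> (complex \<Rightarrow> complex^'n^'n) \<Rightarrow> nat \<Rightarrow> complex \<Rightarrow> complex^'n^'n" where
  "picard_term x0 G 0 = (\<lambda>_. mat 1)"
| "picard_term x0 G (Suc k) =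
     (\<lambda>z. \<chi> i j. contour_integral (linepath x0 z) (\<lambda>w. (G w ** picard_term x0 G k w) $ i $ j))"

definition picard_series :: "complex \<Rightarrow> (complex \<Rightarrow> complex^'n^'n) \<Rightarrow> complex \<Rightarrow> complex^'n^'n" where
  "picard_series x0 G z = (\<chi> i j. \<Sum>k. picard_term x0 G k z $ i $ j)"

lemma picard_series_centre: "picard_series x0 G x0 = mat 1"
proof -
  have "(\<lambda>k. picard_term x0 G (Suc k) x0 $ i $ j) sums 0" for i j
    by simp
  then have "(\<lambda>k. picard_term x0 G k x0 $ i $ j) sums (0 + picard_term x0 G 0 x0 $ i $ j)" for i j
    by (rule iffD1[OF sums_Suc_iff[of "\<lambda>k. picard_term x0 G k x0 $ i $ j"]])
  then show ?thesis
    by (simp add: picard_series_def vec_eq_iff sums_iff)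
qed

context
  fixes G :: "complex \<Rightarrow> complex^'n^'n" and x0 :: complex and M \<delta> :: real
  assumes hol: "\<And>i j. (\<lambda>w. G w $ i $ j) holomorphic_on ball x0 \<delta>"
    and bound: "\<And>w i j. w \<in> ball x0 \<delta> \<Longrightarrow> norm (G w $ i $ j) \<le> M"
    and small: "2 * CARD('n) * M * \<delta> \<le> 1"
begin

lemma picard_term_bound:
  "(\<lambda>w. picard_term x0 G k w $ i $ j) holomorphic_on ball x0 \<delta> \<and>
   (\<forall>w\<in>ball x0 \<delta>. norm (picard_term x0 G k w $ i $ j) \<le> (1/2)^k)"
proof (induction k arbitrary: i j)
  case 0
  show ?case
    by (simp add: mat_def)
next
  case (Suc k)
  have IH_hol: "(\<lambda>w. picard_term x0 G k w $ l $ j) holomorphic_on ball x0 \<delta>" for l j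
    using Suc.IH by blast
  have IH_bound: "norm (picard_term x0 G k w $ l $ j) \<le> (1/2)^k" if "w \<in> ball x0 \<delta>" for w l j
    using Suc.IH that by blast
  define h where "h w = (G w ** picard_term x0 G k w) $ i $ j" for w
  have term_eq: "(\<lambda>w. picard_term x0 G (Suc k) w $ i $ j) = (\<lambda>w. contour_integral (linepath x0 w) h)"
    by (simp add: h_def[abs_def])
  have h_hol: "h holomorphic_on ball x0 \<delta>"
    unfolding h_def matrix_matrix_mult_def vec_lambda_beta
    by (intro holomorphic_intros hol IH_hol)
  have h_bound: "norm (h w) \<le> CARD('n) * M * (1/2)^k" if "w \<in> ball x0 \<delta>" for w
    unfolding h_def by (intro norm_matrix_mult_nth_le bound IH_bound that)
  show ?case
  proof
    show "(\<lambda>w. picard_term x0 G (Suc k) w $ i $ j) holomorphic_on ball x0 \<delta>"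
      unfolding term_eq holomorphic_on_open[OF open_ball]
      using has_field_derivative_contour_integral_linepath[OF h_hol] by blast
    show "\<forall>z\<in>ball x0 \<delta>. norm (picard_term x0 G (Suc k) z $ i $ j) \<le> (1/2)^Suc k"
    proof
      fix z assume z: "z \<in> ball x0 \<delta>"
      have "norm (contour_integral (linepath x0 z) h) \<le> CARD('n) * M * (1/2)^k * \<delta>"
        by (rule norm_contour_integral_linepath_le[OF h_hol z h_bound])
      also have "\<dots> = (CARD('n) * M * \<delta>) * (1/2)^k"
        by (simp add: ac_simps)
      also have "\<dots> \<le> (1/2) * (1/2)^k"
        using small by (intro mult_right_mono) simp_all
      finally show "norm (picard_term x0 G (Suc k) z $ i $ j) \<le> (1/2)^Suc k"
        using fun_cong[OF term_eq, of z] by (simp only: power_Suc)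
    qed
  qed
qed

lemma picard_term_has_field_derivative:
  assumes "w \<in> ball x0 \<delta>"
  shows "((\<lambda>z. picard_term x0 G (Suc k) z $ i $ j) has_field_derivative
    (G w ** picard_term x0 G k w) $ i $ j) (at w)"
proof -
  have "(\<lambda>w. (G w ** picard_term x0 G k w) $ i $ j) holomorphic_on ball x0 \<delta>"
    unfolding matrix_matrix_mult_def vec_lambda_beta using picard_term_bound
    by (intro holomorphic_intros hol) blast
  then show ?thesis
    using has_field_derivative_contour_integral_linepath[OF _ assms] by simp
qed

lemma picard_series_sums:
  assumes "z \<in> ball x0 \<delta>"
  shows "(\<lambda>k. picard_term x0 G k z $ i $ j) sums picard_series x0 G z $ i $ j"
  unfolding picard_series_def vec_lambda_beta using assms picard_term_bound
  by (intro summable_sums summable_comparison_test[OF _ summable_geometric[of "1/2"]]) auto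

lemma solves_on_picard_series: "solves_on G (picard_series x0 G) (ball x0 \<delta>)"
  unfolding solves_on_def
proof (intro ballI allI)
  fix z i j assume z: "z \<in> ball x0 \<delta>"
  define Y where "Y = picard_series x0 G"
  define f' where "f' k w = (case k of 0 \<Rightarrow> 0 | Suc k \<Rightarrow> (G w ** picard_term x0 G k w) $ i $ j)" for k w
  have deriv: "((\<lambda>w. picard_term x0 G k w $ i $ j) has_field_derivative f' k w) (at w)"
    if "w \<in> ball x0 \<delta>" for k w
    using picard_term_has_field_derivative[OF that] by (cases k) (simp_all add: f'_def)
  have summands: "\<forall>\<^sub>F k in sequentially. \<forall>w\<in>ball x0 \<delta>. norm (picard_term x0 G k w $ i $ j) \<le> (1/2)^k"
    using picard_term_bound by (intro always_eventually) blast
  obtain g g' where "\<forall>w\<in>ball x0 \<delta>. (\<lambda>k. picard_term x0 G k w $ i $ j) sums g w \<and>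
      (\<lambda>k. f' k w) sums g' w \<and> (g has_field_derivative g' w) (at w)"
    using series_and_derivative_comparison[OF open_ball summable_geometric deriv summands] by auto
  then have g: "(\<lambda>k. picard_term x0 G k w $ i $ j) sums g w"
    "(\<lambda>k. f' k w) sums g' w" "(g has_field_derivative g' w) (at w)"
    if "w \<in> ball x0 \<delta>" for w
    using that by blast+
  have "(\<lambda>k. f' (Suc k) z) sums (\<Sum>l\<in>UNIV. G z $ i $ l * Y z $ l $ j)"
    unfolding f'_def matrix_matrix_mult_def Y_def using picard_series_sums[OF z]
    by (auto intro!: sums_sum sums_mult)
  then have "(\<lambda>k. f' k z) sums ((\<Sum>l\<in>UNIV. G z $ i $ l * Y z $ l $ j) + f' 0 z)"
    by (rule iffD1[OF sums_Suc_iff[of "\<lambda>k. f' k z"]])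
  then have "g' z = (G z ** Y z) $ i $ j"
    using g(2)[OF z] sums_unique2 by (fastforce simp: f'_def matrix_matrix_mult_def)
  then have "(g has_field_derivative (G z ** Y z) $ i $ j) (at z)"
    using g(3)[OF z] by simp
  moreover have "g w = Y w $ i $ j" if "w \<in> ball x0 \<delta>" for w
    using g(1)[OF that] picard_series_sums[OF that] sums_unique2 unfolding Y_def by blast
  ultimately show "((\<lambda>w. Y w $ i $ j) has_field_derivative (G z ** Y z) $ i $ j) (at z)"
    by (rule has_field_derivative_transform_within_open[where f = g, OF _ open_ball z])
qed

end

lemma holomorphic_fundamental_solution:
  fixes G :: "complex \<Rightarrow> complex^'n^'n"
  assumes "\<rho> > 0" and hol: "\<And>i j. (\<lambda>x. G x $ i $ j) holomorphic_on ball x0 \<rho>"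
  obtains \<delta> Y where "\<delta> > 0" "solves_on G Y (ball x0 \<delta>)" "Y x0 = mat 1"
proof -
  have "continuous_on (cball x0 (\<rho> / 2)) (\<lambda>x. \<chi> i j. G x $ i $ j)"
    using \<open>\<rho> > 0\<close>
    by (intro continuous_on_vec_lambda holomorphic_on_imp_continuous_on
        holomorphic_on_subset[OF hol]) auto
  then have "bounded (G ` cball x0 (\<rho> / 2))"
    by (intro compact_imp_bounded compact_continuous_image) auto
  then obtain M where M: "M > 0" "\<And>x. x \<in> cball x0 (\<rho> / 2) \<Longrightarrow> norm (G x) \<le> M"
    by (auto simp: bounded_pos)
  define \<delta> where "\<delta> = min (\<rho> / 2) (1 / (2 * CARD('n) * M))"
  have pos: "0 < 2 * CARD('n) * M"
    using M(1) by simp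
  have \<delta>: "\<delta> > 0" "ball x0 \<delta> \<subseteq> ball x0 \<rho>" "2 * CARD('n) * M * \<delta> \<le> 1"
  proof -
    show "\<delta> > 0"
      unfolding \<delta>_def using pos \<open>\<rho> > 0\<close> by simp
    show "ball x0 \<delta> \<subseteq> ball x0 \<rho>"
      by (rule subset_ball) (simp add: \<delta>_def \<open>\<rho> > 0\<close> min.coboundedI1)
    have "\<delta> \<le> 1 / (2 * CARD('n) * M)"
      by (simp add: \<delta>_def)
    then show "2 * CARD('n) * M * \<delta> \<le> 1"
      using pos by (simp add: le_divide_eq mult.commute)
  qed
  have bound: "norm (G w $ i $ j) \<le> M" if "w \<in> ball x0 \<delta>" for w i j
  proof -
    have "norm (G w $ i $ j) \<le> norm (G w $ i)" "norm (G w $ i) \<le> norm (G w)"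
      by (simp_all add: Finite_Cartesian_Product.norm_nth_le)
    moreover have "w \<in> cball x0 (\<rho> / 2)"
      using that by (simp add: \<delta>_def)
    ultimately show ?thesis
      using M(2)[of w] by linarith
  qed
  show ?thesis
    using that[OF \<delta>(1) solves_on_picard_series[OF holomorphic_on_subset[OF hol \<delta>(2)] bound \<delta>(3)]]
    by (simp add: picard_series_centre)
qed

section \<open>The sheared system\<close>

lemma gauge_shear_vanishes_below:
  fixes L :: "'a::field fls^2^2"
  assumes L11: "fls_vanishes_below 1 (L $ 1 $ 1 - fls_const a)"
    and L22: "fls_vanishes_below 1 (L $ 2 $ 2 - fls_const b)"
    and L21: "fls_vanishes_below 2 (L $ 2 $ 1)"
    and L12: "fls_vanishes_below 0 (L $ 1 $ 2 - fls_const c * fls_X_inv\<^sup>2 - fls_const g * fls_X_inv)"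
  defines "G \<equiv> gauge_shear (fls_const c * fls_X_inv) (- fls_const c * fls_X_inv\<^sup>2) L"
  shows "fls_vanishes_below 0 (G $ 1 $ 1)" "fls_vanishes_below 0 (G $ 2 $ 1)"
    "fls_vanishes_below 0 (G $ 2 $ 2)"
    "fls_vanishes_below 0 (G $ 1 $ 2 - fls_const (g - c * (a - b)) * fls_X_inv)"
proof -
  have "fls_vanishes_below 0 ((L $ 1 $ 1 - fls_const a) + fls_const a)"
    "fls_vanishes_below 0 ((L $ 2 $ 2 - fls_const b) + fls_const b)"
    by (intro fls_vanishes_below_add fls_vanishes_below_const fls_vanishes_below_mono[OF L11]
        fls_vanishes_below_mono[OF L22]; simp)+
  then have diag: "fls_vanishes_below 0 (L $ 1 $ 1)" "fls_vanishes_below 0 (L $ 2 $ 2)"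
    by simp_all
  have X_inv_L21: "fls_vanishes_below 1 (fls_X_inv * L $ 2 $ 1)"
    using fls_vanishes_below_X_inv_mult[OF L21] by simp
  have "fls_vanishes_below 0 (fls_const c * (fls_X_inv * L $ 2 $ 1))"
    by (intro fls_vanishes_below_const_mult fls_vanishes_below_mono[OF X_inv_L21]) simp
  then have shear_L21: "fls_vanishes_below 0 (fls_const c * fls_X_inv * L $ 2 $ 1)"
    by (simp add: mult.assoc)
  show "fls_vanishes_below 0 (G $ 1 $ 1)" "fls_vanishes_below 0 (G $ 2 $ 2)"
    unfolding G_def gauge_shear_nth
    by (intro fls_vanishes_below_add fls_vanishes_below_diff diag shear_L21)+
  show "fls_vanishes_below 0 (G $ 2 $ 1)"
    unfolding G_def gauge_shear_nth by (rule fls_vanishes_below_mono[OF L21]) simp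
  have residue:
    "fls_const (g - c * (a - b)) = fls_const g - fls_const c * (fls_const a - fls_const b)"
    by (simp add: fls_minus_const)
  \<comment> \<open>the double pole cancels by the choice of \<open>c\<close>, the simple pole leaves the residue\<close>
  have eq: "G $ 1 $ 2 - fls_const (g - c * (a - b)) * fls_X_inv =
      (L $ 1 $ 2 - fls_const c * fls_X_inv\<^sup>2 - fls_const g * fls_X_inv)
      + fls_const c * (fls_X_inv * ((L $ 2 $ 2 - fls_const b) - (L $ 1 $ 1 - fls_const a)))
      - fls_const (c * c) * (fls_X_inv * (fls_X_inv * L $ 2 $ 1))"
    unfolding G_def gauge_shear_nth residue power2_eq_square fls_const_mult_const[symmetric]
    by algebra
  have diag_diff:
    "fls_vanishes_below 0 (fls_X_inv * ((L $ 2 $ 2 - fls_const b) - (L $ 1 $ 1 - fls_const a)))"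
    using fls_vanishes_below_X_inv_mult[OF fls_vanishes_below_diff[OF L22 L11]] by simp
  have double_pole: "fls_vanishes_below 0 (fls_X_inv * (fls_X_inv * L $ 2 $ 1))"
    using fls_vanishes_below_X_inv_mult[OF X_inv_L21] by simp
  show "fls_vanishes_below 0 (G $ 1 $ 2 - fls_const (g - c * (a - b)) * fls_X_inv)"
    unfolding eq
    by (rule fls_vanishes_below_diff fls_vanishes_below_add L12 fls_vanishes_below_const_mult
        diag_diff double_pole)+
qed

definition shear_system ::
    "complex \<Rightarrow> complex \<Rightarrow> (complex \<Rightarrow> complex^2^2) \<Rightarrow> complex \<Rightarrow> complex^2^2" where
  "shear_system c x0 A x = gauge_shear (c / (x - x0)) (- c / (x - x0)\<^sup>2) (A x)"

lemma shear_pole_has_field_derivative: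
  assumes "x \<noteq> x0"
  shows "((\<lambda>y. shear (c / (y - x0)) $ i $ j) has_field_derivative
    (shear (- c / (x - x0)\<^sup>2) - mat 1) $ i $ j) (at x)"
  using assms
  by (intro shear_has_field_derivative) (auto intro!: derivative_eq_intros simp: power2_eq_square)

lemma solves_on_shear_system:
  assumes "solves_on A W S" "x0 \<notin> S"
  shows "solves_on (shear_system c x0 A) (\<lambda>x. shear (c / (x - x0)) ** W x) S"
  using assms(2)
  by (intro solves_on_gauge[OF assms(1), where T' = "\<lambda>x. shear (- c / (x - x0)\<^sup>2) - mat 1"]
      shear_pole_has_field_derivative) (auto simp: shear_system_def gauge_shear_intertwines(1))

lemma solves_on_unshear_system:
  assumes "solves_on (shear_system c x0 A) Y S" "x0 \<notin> S"
  shows "solves_on A (\<lambda>x. shear (- c / (x - x0)) ** Y x) S"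
proof (rule solves_on_gauge[OF assms(1)])
  fix x i j assume "x \<in> S"
  then show "((\<lambda>y. shear (- c / (y - x0)) $ i $ j) has_field_derivative
      (shear (c / (x - x0)\<^sup>2) - mat 1) $ i $ j) (at x)"
    using assms(2) shear_pole_has_field_derivative[of x x0 "- c"] by auto
  show "shear (c / (x - x0)\<^sup>2) - mat 1 + shear (- c / (x - x0)) ** shear_system c x0 A x
      = A x ** shear (- c / (x - x0))"
    using gauge_shear_intertwines(2)[of "- c / (x - x0)\<^sup>2" "c / (x - x0)" "A x"]
    by (simp add: shear_system_def)
qed

lemma has_laurent_expansion_shear_system:
  assumes "(\<lambda>z. A (x0 + z)) has_laurent_expansion_entrywise L"
  shows "(\<lambda>z. shear_system c x0 A (x0 + z)) has_laurent_expansion_entrywise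
    gauge_shear (fls_const c * fls_X_inv) (- fls_const c * fls_X_inv\<^sup>2) L"
proof -
  have "(\<lambda>z. c * inverse z) has_laurent_expansion fls_const c * inverse fls_X"
    "(\<lambda>z. - c * inverse z ^ 2) has_laurent_expansion - fls_const c * inverse fls_X ^ 2"
    by (intro laurent_expansion_intros)+
  then have t: "(\<lambda>z. c * inverse z) has_laurent_expansion fls_const c * fls_X_inv"
    and dt: "(\<lambda>z. - c * inverse z ^ 2) has_laurent_expansion - fls_const c * fls_X_inv\<^sup>2"
    by (simp_all add: fls_inverse_X)
  have "(\<lambda>z. gauge_shear (c * inverse z) (- c * inverse z ^ 2) (A (x0 + z)))
      has_laurent_expansion_entrywise
      gauge_shear (fls_const c * fls_X_inv) (- fls_const c * fls_X_inv\<^sup>2) L"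
    unfolding gauge_shear_def
    by (intro has_laurent_expansion_entrywise_mult has_laurent_expansion_entrywise_add
        has_laurent_expansion_entrywise_diff has_laurent_expansion_entrywise_shear
        has_laurent_expansion_entrywise_mat_1 has_laurent_expansion_minus t dt assms)
  then show ?thesis
    by (simp add: shear_system_def divide_inverse power_inverse)
qed

lemma has_laurent_expansion_simple_pole: "(\<lambda>z. c / z) has_laurent_expansion fls_const c * fls_X_inv"
proof -
  have "(\<lambda>z. c * inverse z) has_laurent_expansion fls_const c * inverse fls_X"
    by (intro laurent_expansion_intros)
  then show ?thesis
    by (simp add: fls_inverse_X divide_inverse)
qed

lemma strong_regular_point_imp_laurent_solution:
  assumes "strong_regular_point A x0"
  shows "\<exists>r W FW. r > 0 \<and> solves_on A W (ball x0 r - {x0}) \<and>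
    (\<forall>x\<in>ball x0 r - {x0}. det (W x) \<noteq> 0) \<and> (\<lambda>z. W (x0 + z)) has_laurent_expansion_entrywise FW"
proof -
  obtain r W m where r: "r > 0" and sol: "solves_on A W (ball x0 r - {x0})"
    and det: "\<forall>x\<in>ball x0 r - {x0}. det (W x) \<noteq> 0"
    and series: "\<forall>i j. \<exists>b :: nat \<Rightarrow> complex. \<forall>x\<in>ball x0 r - {x0}.
        (\<lambda>n. b n * (x - x0) powi (int n + m)) sums (W x $ i $ j)"
    using assms unfolding strong_regular_point_def by blast
  from series obtain b where b: "\<And>i j x. x \<in> ball x0 r - {x0} \<Longrightarrow>
      (\<lambda>n. b i j n * (x - x0) powi (int n + m)) sums (W x $ i $ j)"
    by metis
  have "(\<lambda>z. W (x0 + z)) has_laurent_expansion_entrywise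
      (\<chi> i j. fps_to_fls (Abs_fps (b i j)) * fls_X_intpow m)"
    unfolding has_laurent_expansion_entrywise_def
    by (auto intro!: has_laurent_expansion_of_sums[OF r] b)
  with r sol det show ?thesis
    by (intro exI conjI)
qed

lemma not_strong_regular_point_if_residue:
  fixes A :: "complex \<Rightarrow> complex^2^2" and L :: "complex fls^2^2" and c :: complex
  defines "G \<equiv> gauge_shear (fls_const c * fls_X_inv) (- fls_const c * fls_X_inv\<^sup>2) L"
  assumes LA: "(\<lambda>z. A (x0 + z)) has_laurent_expansion_entrywise L"
    and G: "fls_vanishes_below 0 (G $ 1 $ 1)"
      "fls_vanishes_below 0 (G $ 1 $ 2 - fls_const e * fls_X_inv)"
      "fls_vanishes_below 0 (G $ 2 $ 1)" "fls_vanishes_below 0 (G $ 2 $ 2)"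
    and e: "e \<noteq> 0"
  shows "\<not> strong_regular_point A x0"
proof
  assume srp: "strong_regular_point A x0"
  obtain r W FW where r: "r > 0" and sol: "solves_on A W (ball x0 r - {x0})"
    and det: "\<forall>x\<in>ball x0 r - {x0}. det (W x) \<noteq> 0"
    and FW: "(\<lambda>z. W (x0 + z)) has_laurent_expansion_entrywise FW"
    using strong_regular_point_imp_laurent_solution[OF srp] by blast
  define Y where "Y x = shear (c / (x - x0)) ** W x" for x
  define FY where "FY = shear (fls_const c * fls_X_inv) ** FW"
  have "(\<lambda>z. shear (c / z) ** W (x0 + z)) has_laurent_expansion_entrywise FY"
    unfolding FY_def
    by (intro has_laurent_expansion_entrywise_mult has_laurent_expansion_entrywise_shear
        has_laurent_expansion_simple_pole FW)
  then have FY: "(\<lambda>z. Y (x0 + z)) has_laurent_expansion_entrywise FY"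
    by (simp add: Y_def)
  have "solves_on (shear_system c x0 A) Y (ball x0 r - {x0})"
    unfolding Y_def by (rule solves_on_shear_system[OF sol]) simp
  then have "fls_deriv (FY $ i $ j) = (G ** FY) $ i $ j" for i j
    unfolding G_def
    by (rule solves_on_imp_fls_solution[OF r _ has_laurent_expansion_shear_system[OF LA] FY])
  then have "det FY = 0"
    by (rule det_fls_solution_eq_0[OF _ G e])
  then have "(\<lambda>z. det (Y (x0 + z))) has_laurent_expansion 0"
    using has_laurent_expansion_det[OF FY] by simp
  then have "eventually (\<lambda>x. det (Y x) = 0) (at x0)"
    using has_laurent_expansion_eventually_zero_iff[of "\<lambda>x. det (Y x)"] by blast
  moreover have "eventually (\<lambda>x. x \<in> ball x0 r - {x0}) (at x0)"
    using r by (intro eventually_at_in_open) auto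
  ultimately have "eventually (\<lambda>x. False) (at x0)"
    by eventually_elim (use det in \<open>simp add: Y_def det_mul\<close>)
  then show False
    by simp
qed

lemma solves_on_imp_holomorphic:
  "solves_on A W S \<Longrightarrow> open S \<Longrightarrow> (\<lambda>x. W x $ i $ j) holomorphic_on S"
  by (auto simp: solves_on_def holomorphic_on_open)

lemma det_nonzero_near_identity:
  fixes Y :: "complex \<Rightarrow> complex^'n^'n"
  assumes "\<And>i j. continuous_on (ball x0 \<delta>) (\<lambda>x. Y x $ i $ j)" "\<delta> > 0" "Y x0 = mat 1"
  obtains \<epsilon> where "\<epsilon> > 0" "\<And>x. dist x0 x < \<epsilon> \<Longrightarrow> det (Y x) \<noteq> 0"
proof -
  have "continuous_on (ball x0 \<delta>) (\<lambda>x. det (Y x))"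
    unfolding det_def by (intro continuous_intros assms(1))
  then have "continuous (at x0) (\<lambda>x. det (Y x))"
    using assms(2) by (simp add: continuous_on_eq_continuous_at)
  then show ?thesis
    using continuous_at_avoid[of x0 "\<lambda>x. det (Y x)" 0] assms(3) that by auto
qed

lemma solves_on_subset_cong:
  "solves_on A W S \<Longrightarrow> T \<subseteq> S \<Longrightarrow> (\<And>x. x \<in> T \<Longrightarrow> B x = A x) \<Longrightarrow> solves_on B W T"
  by (auto simp: solves_on_def)

lemma sums_powi_of_holomorphic_divide:
  assumes "g holomorphic_on ball x0 r" "x \<in> ball x0 r - {x0}"
  shows "(\<lambda>n. (deriv ^^ n) g x0 / fact n * (x - x0) powi (int n + - 1)) sums (g x / (x - x0))"
proof -
  have "(\<lambda>n. (deriv ^^ n) g x0 / fact n * (x - x0) ^ n / (x - x0)) sums (g x / (x - x0))"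
    using holomorphic_power_series[OF assms(1)] assms(2) by (intro sums_divide) auto
  moreover have "(\<lambda>n. (deriv ^^ n) g x0 / fact n * (x - x0) ^ n / (x - x0)) =
      (\<lambda>n. (deriv ^^ n) g x0 / fact n * (x - x0) powi (int n + - 1))"
    using assms(2) by (auto simp: power_int_diff)
  ultimately show ?thesis
    by simp
qed

lemma sums_powi_shear_pole_mult:
  fixes Y :: "complex \<Rightarrow> complex^2^2"
  assumes "\<And>i j. (\<lambda>x. Y x $ i $ j) holomorphic_on ball x0 \<delta>"
  shows "\<exists>b. \<forall>x\<in>ball x0 \<delta> - {x0}.
    (\<lambda>n. b n * (x - x0) powi (int n + - 1)) sums (shear (- c / (x - x0)) ** Y x) $ i $ j"
proof -
  \<comment> \<open>the entry has at most a simple pole: \<open>g\<close> is \<open>(x - x\<^sub>0)\<close> times it\<close>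
  define g where "g x = (x - x0) * Y x $ i $ j - (if i = 1 then c else 0) * Y x $ 2 $ j" for x
  have g: "g holomorphic_on ball x0 \<delta>"
    unfolding g_def by (intro holomorphic_intros assms)
  have "(shear (- c / (x - x0)) ** Y x) $ i $ j = g x / (x - x0)" if "x \<noteq> x0" for x
    using that exhaust_2[of i] by (auto simp: g_def matrix_mult_nth_2 field_simps)
  then have sums: "(\<lambda>n. (deriv ^^ n) g x0 / fact n * (x - x0) powi (int n + - 1))
      sums (shear (- c / (x - x0)) ** Y x) $ i $ j" if "x \<in> ball x0 \<delta> - {x0}" for x
    using sums_powi_of_holomorphic_divide[OF g that] that by simp
  show ?thesis
    by (rule exI[of _ "\<lambda>n. (deriv ^^ n) g x0 / fact n"]) (use sums in blast)
qed

lemma strong_regular_point_if_shear_system_holomorphic: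
  fixes A :: "complex \<Rightarrow> complex^2^2" and L :: "complex fls^2^2" and c :: complex
  defines "G \<equiv> gauge_shear (fls_const c * fls_X_inv) (- fls_const c * fls_X_inv\<^sup>2) L"
  assumes r: "r > 0" and hol: "\<And>i j. (\<lambda>x. A x $ i $ j) holomorphic_on ball x0 r - {x0}"
    and LA: "(\<lambda>z. A (x0 + z)) has_laurent_expansion_entrywise L"
    and G: "\<And>i j. fls_vanishes_below 0 (G $ i $ j)"
  shows "strong_regular_point A x0"
proof -
  define B where
    "B x = (\<chi> i j. if x = x0 then fls_nth (G $ i $ j) 0 else shear_system c x0 A x $ i $ j)" for x
  have "(\<lambda>x. shear_system c x0 A x $ i $ j) holomorphic_on ball x0 r - {x0}" for i j
    using hol exhaust_2[of i] exhaust_2[of j]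
    by (auto simp: shear_system_def gauge_shear_nth intro!: holomorphic_intros)
  then have "(\<lambda>x. B x $ i $ j) holomorphic_on ball x0 r" for i j
    using removable_singularity_if_laurent_vanishes_below[OF _ _ G]
      has_laurent_expansion_shear_system[OF LA]
    by (simp add: B_def has_laurent_expansion_entrywise_def G_def)
  then obtain \<delta> Y where \<delta>: "\<delta> > 0" and Y: "solves_on B Y (ball x0 \<delta>)" and Y0: "Y x0 = mat 1"
    using holomorphic_fundamental_solution[OF r] by blast
  have Y_hol: "(\<lambda>x. Y x $ i $ j) holomorphic_on ball x0 \<delta>" for i j
    using solves_on_imp_holomorphic[OF Y] by simp
  obtain \<epsilon> where \<epsilon>: "\<epsilon> > 0" "\<And>x. dist x0 x < \<epsilon> \<Longrightarrow> det (Y x) \<noteq> 0"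
    using det_nonzero_near_identity[OF holomorphic_on_imp_continuous_on[OF Y_hol] \<delta> Y0] by blast
  define R where "R = min r (min \<delta> \<epsilon>)"
  define W where "W x = shear (- c / (x - x0)) ** Y x" for x
  have R: "R > 0" "ball x0 R \<subseteq> ball x0 \<delta>"
    using r \<delta> \<epsilon> by (auto simp: R_def)
  have "solves_on (shear_system c x0 A) Y (ball x0 R - {x0})"
    by (rule solves_on_subset_cong[OF Y]) (auto simp: B_def R_def)
  then have "solves_on A W (ball x0 R - {x0})"
    unfolding W_def by (rule solves_on_unshear_system) simp
  moreover have "det (W x) \<noteq> 0" if "x \<in> ball x0 R - {x0}" for x
    using that \<epsilon>(2)[of x] by (simp add: W_def det_mul R_def)
  moreover have "\<exists>b. \<forall>x\<in>ball x0 R - {x0}. (\<lambda>n. b n * (x - x0) powi (int n + - 1)) sums (W x $ i $ j)"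
    for i j
  proof -
    obtain b where "\<forall>x\<in>ball x0 \<delta> - {x0}.
        (\<lambda>n. b n * (x - x0) powi (int n + - 1)) sums (shear (- c / (x - x0)) ** Y x) $ i $ j"
      using sums_powi_shear_pole_mult[OF Y_hol] by blast
    then show ?thesis
      using R(2) by (intro exI[of _ b]) (auto simp: W_def)
  qed
  ultimately show ?thesis
    unfolding strong_regular_point_def using R(1) by blast
qed

lemma strong_regular_point_iff_residue_eq_0:
  fixes A :: "complex \<Rightarrow> complex^2^2" and L :: "complex fls^2^2"
  assumes r: "r > 0" and hol: "\<And>i j. (\<lambda>x. A x $ i $ j) holomorphic_on ball x0 r - {x0}"
    and LA: "(\<lambda>z. A (x0 + z)) has_laurent_expansion_entrywise L"
    and L11: "fls_vanishes_below 1 (L $ 1 $ 1 - fls_const a)"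
    and L22: "fls_vanishes_below 1 (L $ 2 $ 2 - fls_const b)"
    and L21: "fls_vanishes_below 2 (L $ 2 $ 1)"
    and L12: "fls_vanishes_below 0 (L $ 1 $ 2 - fls_const c * fls_X_inv\<^sup>2 - fls_const g * fls_X_inv)"
  shows "strong_regular_point A x0 \<longleftrightarrow> c * (a - b) = g"
proof
  note G = gauge_shear_vanishes_below[OF L11 L22 L21 L12]
  show "c * (a - b) = g" if "strong_regular_point A x0"
    using not_strong_regular_point_if_residue[OF LA G(1,4,2,3)] that by force
  show "strong_regular_point A x0" if "c * (a - b) = g"
  proof (rule strong_regular_point_if_shear_system_holomorphic[OF r hol LA])
    fix i j :: 2
    show "fls_vanishes_below 0
      (gauge_shear (fls_const c * fls_X_inv) (- fls_const c * fls_X_inv\<^sup>2) L $ i $ j)"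
      using G that exhaust_2[of i] exhaust_2[of j] by auto
  qed
qed

lemma fls_nth_fps_X_intpow:
  fixes b :: "nat \<Rightarrow> 'a::comm_ring_1"
  shows "fls_nth (fps_to_fls (Abs_fps b) * fls_X_intpow m) n =
    (if n - m < 0 then 0 else b (nat (n - m)))"
  by (simp add: fls_X_intpow_times_conv_shift(2))

lemma coefficient_matrix_laurent_expansion:
  fixes A :: "complex \<Rightarrow> complex^2^2" and \<alpha> \<beta> \<gamma> \<mu> :: "nat \<Rightarrow> complex"
  assumes r: "r > 0"
    and a11: "\<And>x. x \<in> ball x0 r - {x0} \<Longrightarrow> (\<lambda>n. \<alpha> n * (x - x0) ^ n) sums (A x $ 1 $ 1)"
    and a22: "\<And>x. x \<in> ball x0 r - {x0} \<Longrightarrow> (\<lambda>n. \<beta> n * (x - x0) ^ n) sums (A x $ 2 $ 2)"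
    and a12: "\<And>x. x \<in> ball x0 r - {x0} \<Longrightarrow> (\<lambda>n. \<gamma> n * (x - x0) powi (int n - 2)) sums (A x $ 1 $ 2)"
    and a21: "\<And>x. x \<in> ball x0 r - {x0} \<Longrightarrow> (\<lambda>n. \<mu> n * (x - x0) ^ (n + 2)) sums (A x $ 2 $ 1)"
  obtains L where "(\<lambda>z. A (x0 + z)) has_laurent_expansion_entrywise L"
    "fls_vanishes_below 1 (L $ 1 $ 1 - fls_const (\<alpha> 0))"
    "fls_vanishes_below 1 (L $ 2 $ 2 - fls_const (\<beta> 0))"
    "fls_vanishes_below 2 (L $ 2 $ 1)"
    "fls_vanishes_below 0 (L $ 1 $ 2 - fls_const (\<gamma> 0) * fls_X_inv\<^sup>2 - fls_const (\<gamma> 1) * fls_X_inv)"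
proof -
  have e11: "(\<lambda>z. A (x0 + z) $ 1 $ 1) has_laurent_expansion fps_to_fls (Abs_fps \<alpha>) * fls_X_intpow 0"
    by (rule has_laurent_expansion_of_sums[OF r]) (use a11 in \<open>simp add: power_int_of_nat\<close>)
  have e22: "(\<lambda>z. A (x0 + z) $ 2 $ 2) has_laurent_expansion fps_to_fls (Abs_fps \<beta>) * fls_X_intpow 0"
    by (rule has_laurent_expansion_of_sums[OF r]) (use a22 in \<open>simp add: power_int_of_nat\<close>)
  have e12: "(\<lambda>z. A (x0 + z) $ 1 $ 2) has_laurent_expansion fps_to_fls (Abs_fps \<gamma>) * fls_X_intpow (- 2)"
    by (rule has_laurent_expansion_of_sums[OF r]) (use a12 in simp)
  have "z powi (int n + 2) = z ^ (n + 2)" for z :: complex and n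
    by (metis of_nat_add of_nat_numeral power_int_of_nat)
  then have e21:
    "(\<lambda>z. A (x0 + z) $ 2 $ 1) has_laurent_expansion fps_to_fls (Abs_fps \<mu>) * fls_X_intpow 2"
    by (intro has_laurent_expansion_of_sums[OF r]) (use a21 in simp)
  define L :: "complex fls^2^2" where "L = vector [
    vector [fps_to_fls (Abs_fps \<alpha>) * fls_X_intpow 0, fps_to_fls (Abs_fps \<gamma>) * fls_X_intpow (- 2)],
    vector [fps_to_fls (Abs_fps \<mu>) * fls_X_intpow 2, fps_to_fls (Abs_fps \<beta>) * fls_X_intpow 0]]"
  show ?thesis
  proof
    show "(\<lambda>z. A (x0 + z)) has_laurent_expansion_entrywise L"
      unfolding has_laurent_expansion_entrywise_def forall_2 L_def vector_2
      using e11 e12 e21 e22 by blast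
    show "fls_vanishes_below 1 (L $ 1 $ 1 - fls_const (\<alpha> 0))"
      "fls_vanishes_below 1 (L $ 2 $ 2 - fls_const (\<beta> 0))"
      "fls_vanishes_below 2 (L $ 2 $ 1)"
      unfolding L_def vector_2 by (auto simp: fls_vanishes_below_def fls_nth_fps_X_intpow)
    have "n = - 1 \<or> n = - 2 \<or> n < - 2" if "n < 0" for n :: int
      using that by linarith
    then show "fls_vanishes_below 0
      (L $ 1 $ 2 - fls_const (\<gamma> 0) * fls_X_inv\<^sup>2 - fls_const (\<gamma> 1) * fls_X_inv)"
      unfolding L_def vector_2 fls_vanishes_below_def fls_minus_nth fls_nth_fps_X_intpow by auto
  qed
qed

theorem proposition4p2:
  fixes A :: "complex \<Rightarrow> complex^2^2" and x0 :: complex and r :: real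
    and \<alpha> \<beta> \<gamma> \<mu> :: "nat \<Rightarrow> complex"
  assumes r: "r > 0"
    and hol: "\<And>i j. (\<lambda>x. A x $ i $ j) holomorphic_on (ball x0 r - {x0})"
    and a11: "\<And>x. x \<in> ball x0 r - {x0} \<Longrightarrow> (\<lambda>n. \<alpha> n * (x - x0) ^ n) sums (A x $ 1 $ 1)"
    and a22: "\<And>x. x \<in> ball x0 r - {x0} \<Longrightarrow> (\<lambda>n. \<beta> n * (x - x0) ^ n) sums (A x $ 2 $ 2)"
    and a12: "\<And>x. x \<in> ball x0 r - {x0} \<Longrightarrow>
                (\<lambda>n. \<gamma> n * (x - x0) powi (int n - 2)) sums (A x $ 1 $ 2)"
    and a21: "\<And>x. x \<in> ball x0 r - {x0} \<Longrightarrow>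
                (\<lambda>n. \<mu> n * (x - x0) ^ (n + 2)) sums (A x $ 2 $ 1)"
  shows "strong_regular_point A x0 \<longleftrightarrow> \<gamma> 0 * (\<alpha> 0 - \<beta> 0) = \<gamma> 1"
proof -
  obtain L where "(\<lambda>z. A (x0 + z)) has_laurent_expansion_entrywise L"
    "fls_vanishes_below 1 (L $ 1 $ 1 - fls_const (\<alpha> 0))"
    "fls_vanishes_below 1 (L $ 2 $ 2 - fls_const (\<beta> 0))"
    "fls_vanishes_below 2 (L $ 2 $ 1)"
    "fls_vanishes_below 0 (L $ 1 $ 2 - fls_const (\<gamma> 0) * fls_X_inv\<^sup>2 - fls_const (\<gamma> 1) * fls_X_inv)"
    using coefficient_matrix_laurent_expansion[OF r a11 a22 a12 a21] .
  then show ?thesis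
    by (rule strong_regular_point_iff_residue_eq_0[OF r hol])
qed

end
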